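(* Let $\Sigma_0$ be a symmetric positive definite $d\times d$ matrix, $A=\Sigma_0^{1/2}$, $y\in\mathbb{R}^d$ and $z_0=A^{-1}y$. Let $g(x)=\sum_{|\alpha|\le m}a_\alpha x^\alpha$ be a polynomial on $\mathbb{R}^d$, let $\phi$ be the standard normal density on $\mathbb{R}^d$, $\varphi_V(\omega)=e^{-\|\omega\|_2^2/2}$, and define $\lambda(w)=g(Aw)\phi(z_0-w)$ and $Q(\omega)=\widetilde{\lambda}(\omega)/\varphi_V(-\omega)$. Then \[ Q(\omega)=e^{i\omega^\top z_0}\sum_{|\gamma|\le m}b_\gamma(y,\Sigma_0)(i\omega)^\gamma,\qquad b_\gamma(y,\Sigma_0)=\sum_{|\alpha|\le m}a_\alpha\sum_{\beta\ge\gamma}C_{\alpha,\beta}(A)\binom{\beta}{\gamma}m_{\beta-\gamma}(z_0), \] where $C_{\alpha,\beta}(A)=\sum_{N\in\mathcal{N}(\alpha,\beta)}\frac{\alpha!}{N!}A^N$, with $\mathcal{N}(\alpha,\beta)=\{N=(n_{jk})\in\mathbb{N}^{d\times d}:\sum_kn_{jk}=\alpha_j,\ \sum_jn_{jk}=\beta_k\}$, $\alpha!=\prod_j\alpha_j!$, $N!=\prod_{j,k}n_{jk}!$, $A^N=\prod_{j,k}A_{jk}^{n_{jk}}$, and \[ m_\nu(z_0)=\prod_{r=1}^d\sum_{q=0}^{\lfloor\nu_r/2\rfloor}\frac{\nu_r!}{2^qq!(\nu_r-2q)!}z_{0,r}^{\nu_r-2q}. \]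
   Context: $\widetilde\psi(\omega)=\int e^{i\omega^\top x}\psi(x)dx$. Multi-index notation: $x^\alpha=\prod_jx_j^{\alpha_j}$, $(i\omega)^\gamma=\prod_j(i\omega_j)^{\gamma_j}$, $\beta\ge\gamma$ means $\beta_j\ge\gamma_j$ for all $j$ (the sum over $\beta$ ranges over multi-indices with $|\beta|\le m$), $\binom{\beta}{\gamma}=\prod_j\binom{\beta_j}{\gamma_j}$. *)

theory Defs
  imports "HOL-Analysis.Analysis"
begin

text \<open>Multi-indices on the index type 'n (dimension d = CARD('n)).\<close>

definition mi_abs :: "('n::finite \<Rightarrow> nat) \<Rightarrow> nat" where
  "mi_abs \<alpha> = (\<Sum>j\<in>UNIV. \<alpha> j)"

definition multi_indices :: "nat \<Rightarrow> ('n::finite \<Rightarrow> nat) set" where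
  "multi_indices m = {\<alpha>. mi_abs \<alpha> \<le> m}"

definition mi_fact :: "('n::finite \<Rightarrow> nat) \<Rightarrow> real" where
  "mi_fact \<alpha> = (\<Prod>j\<in>UNIV. fact (\<alpha> j))"

definition mi_binom :: "('n::finite \<Rightarrow> nat) \<Rightarrow> ('n \<Rightarrow> nat) \<Rightarrow> real" where
  "mi_binom \<beta> \<gamma> = (\<Prod>j\<in>UNIV. real (\<beta> j choose \<gamma> j))"

definition mi_pow :: "real^'n::finite \<Rightarrow> ('n \<Rightarrow> nat) \<Rightarrow> real" where
  "mi_pow x \<alpha> = (\<Prod>j\<in>UNIV. (x $ j) ^ \<alpha> j)"

definition mi_ipow :: "real^'n::finite \<Rightarrow> ('n \<Rightarrow> nat) \<Rightarrow> complex" where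
  "mi_ipow \<omega> \<gamma> = (\<Prod>j\<in>UNIV. (\<i> * complex_of_real (\<omega> $ j)) ^ \<gamma> j)"

definition mpoly_eval :: "nat \<Rightarrow> (('n::finite \<Rightarrow> nat) \<Rightarrow> real) \<Rightarrow> real^'n \<Rightarrow> real" where
  "mpoly_eval m a x = (\<Sum>\<alpha>\<in>multi_indices m. a \<alpha> * mi_pow x \<alpha>)"

definition std_normal_density :: "real^'n::finite \<Rightarrow> real" where
  "std_normal_density x = (2 * pi) powr (- real CARD('n) / 2) * exp (- (norm x)\<^sup>2 / 2)"

definition phi_V :: "real^'n::finite \<Rightarrow> real" where
  "phi_V \<omega> = exp (- (norm \<omega>)\<^sup>2 / 2)"

definition fourier :: "(real^'n::finite \<Rightarrow> complex) \<Rightarrow> real^'n \<Rightarrow> complex" where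
  "fourier \<psi> \<omega> = integral\<^sup>L lborel (\<lambda>x. cis (\<omega> \<bullet> x) * \<psi> x)"

definition Nset :: "('n::finite \<Rightarrow> nat) \<Rightarrow> ('n \<Rightarrow> nat) \<Rightarrow> ('n \<Rightarrow> 'n \<Rightarrow> nat) set" where
  "Nset \<alpha> \<beta> = {N. (\<forall>j. (\<Sum>k\<in>UNIV. N j k) = \<alpha> j) \<and> (\<forall>k. (\<Sum>j\<in>UNIV. N j k) = \<beta> k)}"

definition Ccoef :: "('n::finite \<Rightarrow> nat) \<Rightarrow> ('n \<Rightarrow> nat) \<Rightarrow> real^'n^'n \<Rightarrow> real" where
  "Ccoef \<alpha> \<beta> A = (\<Sum>N\<in>Nset \<alpha> \<beta>.
      mi_fact \<alpha> / (\<Prod>j\<in>UNIV. \<Prod>k\<in>UNIV. fact (N j k))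
      * (\<Prod>j\<in>UNIV. \<Prod>k\<in>UNIV. (A $ j $ k) ^ N j k))"

text \<open>m_nu(z) (Gaussian moments about z).\<close>
definition mnu :: "('n::finite \<Rightarrow> nat) \<Rightarrow> real^'n \<Rightarrow> real" where
  "mnu \<nu> z = (\<Prod>r\<in>UNIV. \<Sum>q = 0..\<nu> r div 2.
      fact (\<nu> r) / (2 ^ q * fact q * fact (\<nu> r - 2 * q)) * (z $ r) ^ (\<nu> r - 2 * q))"

definition bcoef :: "nat \<Rightarrow> (('n::finite \<Rightarrow> nat) \<Rightarrow> real) \<Rightarrow> real^'n^'n \<Rightarrow> real^'n
                     \<Rightarrow> ('n \<Rightarrow> nat) \<Rightarrow> real" where
  "bcoef m a A z0 \<gamma> = (\<Sum>\<alpha>\<in>multi_indices m. a \<alpha> *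
      (\<Sum>\<beta>\<in>{\<beta>\<in>multi_indices m. \<forall>j. \<gamma> j \<le> \<beta> j}.
          Ccoef \<alpha> \<beta> A * mi_binom \<beta> \<gamma> * mnu (\<lambda>j. \<beta> j - \<gamma> j) z0))"

end

theory Submission
  imports Defs "HOL-Probability.Characteristic_Functions" "HOL-Real_Asymp.Real_Asymp"
begin

text \<open>
  Expanding g(A w) by the multinomial theorem into monomials w^\<beta> with coefficients
  C_{\<alpha>,\<beta>}(A), the Fourier integral of each monomial against \<phi>(z0 - w) factorizes over
  the coordinates. In one variable, integration by parts shows that
  K_k(\<omega>) = \<integral> e^{i\<omega>t} t^k \<phi>(t - z) dt satisfies K_{k+1} = (z + i\<omega>) K_k + k K_{k-1}.
  At \<omega> = 0 this is the recurrence m_{k+1} = z m_k + k m_{k-1} of the moments m_k(z) of N(z, 1),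
  and the Appell polynomial \<Sum>_g (k choose g) m_{k-g}(z) (i\<omega>)^g inherits it; comparing initial
  values gives K_k(\<omega>) = e^{i\<omega>z - \<omega>^2/2} \<Sum>_g (k choose g) m_{k-g}(z) (i\<omega>)^g.
  Multiplying over the coordinates and collecting the powers (i\<omega>)^\<gamma> yields b_\<gamma>.
\<close>

section \<open>Moments of the normal distribution\<close>

definition gauss_moment :: "nat \<Rightarrow> real \<Rightarrow> real" where
  "gauss_moment k z =
     (\<Sum>q = 0..k div 2. fact k / (2 ^ q * fact q * fact (k - 2 * q)) * z ^ (k - 2 * q))"

lemma mnu_eq_prod_gauss_moment: "mnu \<nu> z = (\<Prod>r\<in>UNIV. gauss_moment (\<nu> r) (z $ r))"
  by (simp add: mnu_def gauss_moment_def)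

definition std_normal_moment :: "nat \<Rightarrow> real" where
  "std_normal_moment j = (if even j then fact j / (2 ^ (j div 2) * fact (j div 2)) else 0)"

lemma integral_normal_central_moment:
  "(\<integral>x. normal_density \<mu> 1 x * (x - \<mu>) ^ j \<partial>lborel) = std_normal_moment j"
proof (cases "even j")
  case True
  then obtain q where "j = 2 * q" by (auto elim: evenE)
  then show ?thesis using integral_normal_moment_even[of 1 \<mu> q] by (simp add: std_normal_moment_def)
next
  case False
  then obtain q where "j = 2 * q + 1" by (auto elim: oddE)
  then show ?thesis using integral_normal_moment_odd[of 1 \<mu> q] by (simp add: std_normal_moment_def)
qed

lemma normal_power_binomial:
  "normal_density \<mu> \<sigma> x * x ^ k
     = (\<Sum>j\<le>k. real (k choose j) * \<mu> ^ (k - j) * (normal_density \<mu> \<sigma> x * (x - \<mu>) ^ j))"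
proof -
  have "x ^ k = ((x - \<mu>) + \<mu>) ^ k" by simp
  also have "\<dots> = (\<Sum>j\<le>k. real (k choose j) * (x - \<mu>) ^ j * \<mu> ^ (k - j))"
    by (rule binomial_ring)
  finally show ?thesis by (simp add: sum_distrib_left mult_ac)
qed

lemma integrable_normal_power:
  "0 < \<sigma> \<Longrightarrow> integrable lborel (\<lambda>x. normal_density \<mu> \<sigma> x * x ^ k)"
  unfolding normal_power_binomial
  by (intro Bochner_Integration.integrable_sum Bochner_Integration.integrable_mult_right
      integrable_normal_moment)

lemma sum_atMost_even:
  fixes g :: "nat \<Rightarrow> 'a::comm_monoid_add"
  assumes "\<And>j. odd j \<Longrightarrow> g j = 0"
  shows "(\<Sum>j\<le>k. g j) = (\<Sum>q = 0..k div 2. g (2 * q))"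
proof -
  have "(\<Sum>q = 0..k div 2. g (2 * q)) = sum g ((\<lambda>q. 2 * q) ` {0..k div 2})"
    by (subst sum.reindex) (auto simp: inj_on_def)
  also have "\<dots> = (\<Sum>j\<le>k. g j)"
  proof (rule sum.mono_neutral_left)
    show "\<forall>i\<in>{..k} - (\<lambda>q. 2 * q) ` {0..k div 2}. g i = 0"
    proof
      fix i assume i: "i \<in> {..k} - (\<lambda>q. 2 * q) ` {0..k div 2}"
      show "g i = 0"
      proof (cases "even i")
        case True
        then have "i = 2 * (i div 2)" by simp
        moreover have "i div 2 \<in> {0..k div 2}" using i by (auto intro: div_le_mono)
        ultimately show ?thesis using i by blast
      qed (rule assms)
    qed
  qed auto
  finally show ?thesis ..
qed

lemma integral_normal_power: "(\<integral>x. normal_density z 1 x * x ^ k \<partial>lborel) = gauss_moment k z"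
proof -
  have "(\<integral>x. normal_density z 1 x * x ^ k \<partial>lborel)
      = (\<Sum>j\<le>k. real (k choose j) * z ^ (k - j) * std_normal_moment j)"
    unfolding normal_power_binomial
    by (simp add: integrable_normal_moment integral_normal_central_moment)
  also have "\<dots> = (\<Sum>q = 0..k div 2. real (k choose (2 * q)) * z ^ (k - 2 * q) * std_normal_moment (2 * q))"
    by (rule sum_atMost_even) (simp add: std_normal_moment_def)
  also have "\<dots> = gauss_moment k z"
    unfolding gauss_moment_def
    by (intro sum.cong refl) (auto simp: binomial_fact std_normal_moment_def field_simps)
  finally show ?thesis .
qed

lemma normal_density_has_derivative:
  "(normal_density \<mu> 1 has_real_derivative - (x - \<mu>) * normal_density \<mu> 1 x) (at x)"
proof -
  obtain c where c: "normal_density \<mu> 1 = (\<lambda>x. c * exp (- (x - \<mu>)\<^sup>2 / 2))"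
    by (intro that[of "1 / sqrt (2 * pi)"]) (simp add: normal_density_def fun_eq_iff)
  show ?thesis
    unfolding c by (auto intro!: derivative_eq_intros simp: field_simps)
qed

lemma isCont_normal_density: "isCont (normal_density \<mu> 1) x"
  using normal_density_has_derivative by (rule DERIV_isCont)

lemma tendsto_abs_power_normal_at_top:
  "((\<lambda>x. \<bar>x\<bar> ^ k * normal_density \<mu> 1 x) \<longlongrightarrow> 0) at_top"
proof (rule Lim_transform_eventually)
  have "((\<lambda>x. exp x * normal_density \<mu> 1 x) \<longlongrightarrow> 0) at_top"
    unfolding normal_density_def by real_asymp
  from tendsto_mult[OF tendsto_power_div_exp_0 this]
  show "((\<lambda>x. x ^ k / exp x * (exp x * normal_density \<mu> 1 x)) \<longlongrightarrow> 0) at_top"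
    by simp
  show "\<forall>\<^sub>F x in at_top. x ^ k / exp x * (exp x * normal_density \<mu> 1 x)
      = \<bar>x\<bar> ^ k * normal_density \<mu> 1 x"
    using eventually_ge_at_top[of 0] by eventually_elim simp
qed

lemma tendsto_abs_power_normal_at_bot:
  "((\<lambda>x. \<bar>x\<bar> ^ k * normal_density \<mu> 1 x) \<longlongrightarrow> 0) at_bot"
proof -
  have "normal_density \<mu> 1 (- x) = normal_density (- \<mu>) 1 x" for x
    by (simp add: normal_density_def power2_commute add.commute)
  then show ?thesis
    unfolding filterlim_at_bot_mirror using tendsto_abs_power_normal_at_top[of k "- \<mu>"] by simp
qed

section \<open>Fourier transform of a power times a normal density\<close>

lemma lborel_integral_derivative_eq_0:
  fixes f F :: "real \<Rightarrow> 'a::euclidean_space"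
  assumes "\<And>x. (F has_vector_derivative f x) (at x)" and "\<And>x. isCont f x"
    and "integrable lborel f" and "(F \<longlongrightarrow> 0) at_top" and "(F \<longlongrightarrow> 0) at_bot"
  shows "integral\<^sup>L lborel f = 0"
proof -
  have "(LBINT x=-\<infinity>..\<infinity>. f x) = 0 - 0"
    by (intro interval_integral_FTC_integrable[where F = F])
       (use assms in \<open>auto simp: ereal_tendsto_simps1 set_integrable_def\<close>)
  then show ?thesis
    by (simp add: interval_lebesgue_integral_def set_lebesgue_integral_def)
qed

definition fourier_normal_power :: "nat \<Rightarrow> real \<Rightarrow> real \<Rightarrow> complex" where
  "fourier_normal_power k z w =
     (\<integral>x. cis (w * x) * of_real (normal_density z 1 x * x ^ k) \<partial>lborel)"

lemma integrable_cis_normal_power: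
  "integrable lborel (\<lambda>x. cis (w * x) * of_real (normal_density z 1 x * x ^ k))"
proof (rule Bochner_Integration.integrable_bound[OF integrable_normal_power])
  show "(\<lambda>x. cis (w * x) * of_real (normal_density z 1 x * x ^ k)) \<in> borel_measurable lborel"
    unfolding measurable_lborel2 normal_density_def
    by (intro borel_measurable_continuous_onI continuous_intros) auto
  show "AE x in lborel. norm (cis (w * x) * of_real (normal_density z 1 x * x ^ k))
      \<le> norm (normal_density z 1 x * x ^ k)"
    by (simp add: norm_mult abs_mult norm_power power_abs)
qed simp

lemma cis_normal_power_has_vector_derivative:
  "((\<lambda>x. cis (w * x) * of_real (normal_density z 1 x * x ^ k)) has_vector_derivative
      (of_real z + \<i> * of_real w) * (cis (w * x) * of_real (normal_density z 1 x * x ^ k))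
      + of_nat k * (cis (w * x) * of_real (normal_density z 1 x * x ^ (k - 1)))
      - cis (w * x) * of_real (normal_density z 1 x * x ^ Suc k)) (at x)"
proof -
  have cis_eq: "cis (w * x) = exp (\<i> * of_real w * of_real x)" for x
    by (simp add: cis_conv_exp mult_ac)
  have "((\<lambda>x. exp (\<i> * of_real w * of_real x) * of_real (normal_density z 1 x * x ^ k))
      has_vector_derivative
        exp (\<i> * of_real w * of_real x) * of_real (- (x - z) * normal_density z 1 x * x ^ k
          + normal_density z 1 x * (real k * x ^ (k - 1)))
        + \<i> * of_real w * exp (\<i> * of_real w * of_real x) * of_real (normal_density z 1 x * x ^ k)) (at x)"
    by (intro has_vector_derivative_mult has_vector_derivative_of_real has_vector_derivative_real_field)
       (auto intro!: derivative_eq_intros normal_density_has_derivative)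
  then show ?thesis
    unfolding cis_eq by (simp add: algebra_simps)
qed

lemma fourier_normal_power_Suc:
  "fourier_normal_power (Suc k) z w
     = (of_real z + \<i> * of_real w) * fourier_normal_power k z w
       + of_nat k * fourier_normal_power (k - 1) z w"
proof -
  define e where "e j x = cis (w * x) * of_real (normal_density z 1 x * x ^ j)" for j x
  define f where "f x = (of_real z + \<i> * of_real w) * e k x + of_nat k * e (k - 1) x - e (Suc k) x"
    for x
  have e: "integrable lborel (e j)" for j
    unfolding e_def by (rule integrable_cis_normal_power)
  have norm_e: "norm (e k x) = \<bar>x\<bar> ^ k * normal_density z 1 x" for x
    unfolding e_def by (simp add: norm_mult abs_mult norm_power)
  have "(e k has_vector_derivative f x) (at x)" for x
    unfolding e_def f_def by (rule cis_normal_power_has_vector_derivative)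
  moreover have "isCont f x" for x
    unfolding f_def e_def cis_conv_exp by (intro continuous_intros isCont_normal_density)
  moreover have "integrable lborel f"
    unfolding f_def by (intro Bochner_Integration.integrable_diff Bochner_Integration.integrable_add
        Bochner_Integration.integrable_mult_right e)
  moreover have "(e k \<longlongrightarrow> 0) at_top"
    by (rule tendsto_norm_zero_cancel) (simp only: norm_e tendsto_abs_power_normal_at_top)
  moreover have "(e k \<longlongrightarrow> 0) at_bot"
    by (rule tendsto_norm_zero_cancel) (simp only: norm_e tendsto_abs_power_normal_at_bot)
  ultimately have "integral\<^sup>L lborel f = 0"
    by (rule lborel_integral_derivative_eq_0)
  moreover have "integral\<^sup>L lborel f
      = (of_real z + \<i> * of_real w) * fourier_normal_power k z w
        + of_nat k * fourier_normal_power (k - 1) z w - fourier_normal_power (Suc k) z w"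
    unfolding f_def fourier_normal_power_def e_def[symmetric]
    by (simp add: e Bochner_Integration.integrable_add)
  ultimately show ?thesis by simp
qed

lemma fourier_normal_power_0:
  "fourier_normal_power 0 z w = cis (w * z) * of_real (exp (- w\<^sup>2 / 2))"
proof -
  have "of_real (exp (- w\<^sup>2 / 2)) = char std_normal_distribution w"
    by (simp add: char_std_normal_distribution)
  also have "\<dots> = (\<integral>u. cis (w * u) * of_real (normal_density 0 1 u) \<partial>lborel)"
    unfolding char_def
    by (subst integral_density)
       (auto simp: cis_conv_exp scaleR_conv_of_real mult_ac intro!: Bochner_Integration.integral_cong)
  finally have std: "(\<integral>u. cis (w * u) * of_real (normal_density 0 1 u) \<partial>lborel)
      = of_real (exp (- w\<^sup>2 / 2))" ..
  have "fourier_normal_power 0 z w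
      = (\<integral>u. cis (w * (z + 1 * u)) * of_real (normal_density z 1 (z + 1 * u)) \<partial>lborel)"
    unfolding fourier_normal_power_def
    using lborel_integral_real_affine[of 1 "\<lambda>x. cis (w * x) * of_real (normal_density z 1 x)" z]
    by simp
  also have "\<dots> = (\<integral>u. cis (w * z) * (cis (w * u) * of_real (normal_density 0 1 u)) \<partial>lborel)"
    by (intro Bochner_Integration.integral_cong refl)
       (simp add: normal_density_def distrib_left cis_mult[symmetric])
  also have "\<dots> = cis (w * z) * (\<integral>u. cis (w * u) * of_real (normal_density 0 1 u) \<partial>lborel)"
    by (rule Bochner_Integration.integral_mult_right_zero)
  finally show ?thesis by (simp only: std)
qed

lemma fourier_normal_power_zero_freq: "fourier_normal_power k z 0 = of_real (gauss_moment k z)"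
proof -
  have "fourier_normal_power k z 0 = (\<integral>x. of_real (normal_density z 1 x * x ^ k) \<partial>lborel)"
    by (simp add: fourier_normal_power_def)
  also have "\<dots> = of_real (\<integral>x. normal_density z 1 x * x ^ k \<partial>lborel)"
    by (intro integral_of_real integrable_normal_power) simp
  also have "\<dots> = of_real (gauss_moment k z)"
    by (simp only: integral_normal_power)
  finally show ?thesis .
qed

lemma gauss_moment_Suc:
  "gauss_moment (Suc k) z = z * gauss_moment k z + real k * gauss_moment (k - 1) z"
proof -
  have "complex_of_real (gauss_moment (Suc k) z)
      = of_real (z * gauss_moment k z + real k * gauss_moment (k - 1) z)"
    using fourier_normal_power_Suc[of k z 0] by (simp add: fourier_normal_power_zero_freq)
  then show ?thesis by (simp only: of_real_eq_iff)
qed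

definition appell_poly :: "(nat \<Rightarrow> 'a::comm_semiring_1) \<Rightarrow> nat \<Rightarrow> 'a \<Rightarrow> 'a" where
  "appell_poly M k t = (\<Sum>g\<le>k. of_nat (k choose g) * M (k - g) * t ^ g)"

lemma appell_poly_0 [simp]: "appell_poly M 0 t = M 0"
  by (simp add: appell_poly_def)

lemma appell_poly_Suc_pascal:
  "appell_poly M (Suc k) t = (\<Sum>g\<le>k. of_nat (k choose g) * M (Suc (k - g)) * t ^ g) + t * appell_poly M k t"
proof -
  have "appell_poly M (Suc k) t
      = M (Suc k) + (\<Sum>g\<le>k. of_nat (k choose Suc g) * M (k - g) * t ^ Suc g)
        + (\<Sum>g\<le>k. of_nat (k choose g) * M (k - g) * t ^ Suc g)"
    unfolding appell_poly_def by (subst sum.atMost_Suc_shift) (simp add: algebra_simps sum.distrib)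
  also have "M (Suc k) + (\<Sum>g\<le>k. of_nat (k choose Suc g) * M (k - g) * t ^ Suc g)
      = (\<Sum>g\<le>Suc k. of_nat (k choose g) * M (Suc k - g) * t ^ g)"
    by (subst sum.atMost_Suc_shift) simp
  also have "\<dots> = (\<Sum>g\<le>k. of_nat (k choose g) * M (Suc (k - g)) * t ^ g)"
    by (simp add: Suc_diff_le binomial_eq_0)
  also have "(\<Sum>g\<le>k. of_nat (k choose g) * M (k - g) * t ^ Suc g) = t * appell_poly M k t"
    unfolding appell_poly_def by (simp add: sum_distrib_left algebra_simps)
  finally show ?thesis .
qed

lemma appell_poly_absorb:
  "(\<Sum>g\<le>k. of_nat ((k - g) * (k choose g)) * M (k - 1 - g) * t ^ g) = of_nat k * appell_poly M (k - 1) t"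
proof (cases k)
  case (Suc n)
  have "(\<Sum>g\<le>k. of_nat ((k - g) * (k choose g)) * M (k - 1 - g) * t ^ g)
      = of_nat k * (\<Sum>g\<le>Suc n. of_nat (n choose g) * M (n - g) * t ^ g)"
    unfolding binomial_absorb_comp sum_distrib_left using Suc by (simp add: algebra_simps)
  then show ?thesis
    using Suc by (simp add: appell_poly_def binomial_eq_0)
qed (simp add: appell_poly_def)

lemma appell_poly_Suc:
  fixes M :: "nat \<Rightarrow> 'a::comm_semiring_1"
  assumes M_Suc: "\<And>j. M (Suc j) = z * M j + of_nat j * M (j - 1)"
  shows "appell_poly M (Suc k) t = (z + t) * appell_poly M k t + of_nat k * appell_poly M (k - 1) t"
proof -
  have "(\<Sum>g\<le>k. of_nat (k choose g) * M (Suc (k - g)) * t ^ g)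
      = (\<Sum>g\<le>k. z * (of_nat (k choose g) * M (k - g) * t ^ g)
           + of_nat ((k - g) * (k choose g)) * M (k - 1 - g) * t ^ g)"
    by (intro sum.cong refl)
       (simp only: M_Suc distrib_left distrib_right of_nat_mult mult_ac diff_diff_left add.commute[of 1])
  also have "\<dots> = z * appell_poly M k t + of_nat k * appell_poly M (k - 1) t"
    by (simp only: sum.distrib sum_distrib_left[symmetric] appell_poly_absorb appell_poly_def)
  finally show ?thesis
    by (simp add: appell_poly_Suc_pascal algebra_simps)
qed

lemma fourier_normal_power_eq:
  "fourier_normal_power k z w
     = cis (w * z) * of_real (exp (- w\<^sup>2 / 2))
       * appell_poly (\<lambda>j. of_real (gauss_moment j z)) k (\<i> * of_real w)"
proof (induction k rule: less_induct)
  case (less k)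
  show ?case
  proof (cases k)
    case 0
    then show ?thesis by (simp add: fourier_normal_power_0 gauss_moment_def)
  next
    case (Suc j)
    have M_Suc: "complex_of_real (gauss_moment (Suc i) z)
        = of_real z * of_real (gauss_moment i z) + of_nat i * of_real (gauss_moment (i - 1) z)" for i
      by (simp add: gauss_moment_Suc)
    show ?thesis
      using less.IH[of j] less.IH[of "j - 1"]
      by (simp add: Suc fourier_normal_power_Suc appell_poly_Suc[OF M_Suc] algebra_simps)
  qed
qed

section \<open>Monomials times the normal density in several variables\<close>

lemma lborel_integral_prod_Basis:
  fixes f :: "'a::euclidean_space \<Rightarrow> real \<Rightarrow> 'b::{real_normed_field,banach,second_countable_topology}"
  assumes f: "\<And>b. b \<in> Basis \<Longrightarrow> integrable lborel (f b)"
  shows "integrable lborel (\<lambda>x. \<Prod>b\<in>Basis. f b (x \<bullet> b))"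
    and "(\<integral>x. (\<Prod>b\<in>Basis. f b (x \<bullet> b)) \<partial>lborel) = (\<Prod>b\<in>Basis. integral\<^sup>L lborel (f b))"
proof -
  interpret P: product_sigma_finite "\<lambda>_::'a. lborel :: real measure"
    by standard
  let ?T = "\<lambda>x. \<Sum>b\<in>Basis. x b *\<^sub>R (b::'a)"
  have T: "?T \<in> measurable (\<Pi>\<^sub>M b\<in>Basis. lborel) borel"
    by measurable
  have [measurable]: "f b \<in> borel_measurable borel" if "b \<in> Basis" for b
    using borel_measurable_integrable[OF f[OF that]] by simp
  have prod_f: "(\<lambda>x. \<Prod>b\<in>Basis. f b (x \<bullet> b)) \<in> borel_measurable borel"
    by measurable
  have prod_f_T: "(\<lambda>x. \<Prod>b\<in>Basis. f b (?T x \<bullet> b)) = (\<lambda>x. \<Prod>b\<in>Basis. f b (x b))"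
    by (simp add: inner_sum_left_Basis)
  show "integrable lborel (\<lambda>x. \<Prod>b\<in>Basis. f b (x \<bullet> b))"
    by (subst lborel_eq, subst integrable_distr_eq[OF T prod_f], unfold prod_f_T)
       (rule P.product_integrable_prod, auto intro: f)
  show "(\<integral>x. (\<Prod>b\<in>Basis. f b (x \<bullet> b)) \<partial>lborel) = (\<Prod>b\<in>Basis. integral\<^sup>L lborel (f b))"
    by (subst lborel_eq, subst integral_distr[OF T prod_f], unfold prod_f_T)
       (rule P.product_integral_prod, auto intro: f)
qed

lemma lborel_integral_prod_vec:
  fixes f :: "'n::finite \<Rightarrow> real \<Rightarrow> 'b::{real_normed_field,banach,second_countable_topology}"
  assumes f: "\<And>j. integrable lborel (f j)"
  shows "integrable lborel (\<lambda>x::real^'n. \<Prod>j\<in>UNIV. f j (x $ j))"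
    and "integral\<^sup>L lborel (\<lambda>x::real^'n. \<Prod>j\<in>UNIV. f j (x $ j)) = (\<Prod>j\<in>UNIV. integral\<^sup>L lborel (f j))"
proof -
  let ?e = "\<lambda>j::'n. axis j (1::real)"
  have inj: "inj ?e"
    by (auto simp: inj_def axis_eq_axis)
  have Basis: "(Basis :: (real^'n) set) = range ?e"
    by (auto simp: Basis_vec_def)
  define g where "g b = f (inv ?e b)" for b
  have g_e: "g (?e j) = f j" for j
    unfolding g_def by (simp add: inv_f_f[OF inj])
  have prod_Basis: "(\<Prod>b\<in>Basis. h b) = (\<Prod>j\<in>UNIV. h (?e j))" for h :: "real^'n \<Rightarrow> 'b"
    unfolding Basis by (simp add: prod.reindex[OF inj])
  have prod_f: "(\<lambda>x::real^'n. \<Prod>j\<in>UNIV. f j (x $ j)) = (\<lambda>x. \<Prod>b\<in>Basis. g b (x \<bullet> b))"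
    by (simp add: prod_Basis g_e inner_axis)
  have g: "b \<in> Basis \<Longrightarrow> integrable lborel (g b)" for b
    unfolding Basis using f g_e by auto
  show "integrable lborel (\<lambda>x::real^'n. \<Prod>j\<in>UNIV. f j (x $ j))"
    unfolding prod_f by (rule lborel_integral_prod_Basis(1)[OF g])
  show "integral\<^sup>L lborel (\<lambda>x::real^'n. \<Prod>j\<in>UNIV. f j (x $ j)) = (\<Prod>j\<in>UNIV. integral\<^sup>L lborel (f j))"
    using lborel_integral_prod_Basis(2)[of g, OF g] unfolding prod_f by (simp only: prod_Basis g_e)
qed

lemma cis_sum: "finite I \<Longrightarrow> cis (\<Sum>i\<in>I. f i) = (\<Prod>i\<in>I. cis (f i))"
  by (induction I rule: finite_induct) (simp_all add: cis_mult[symmetric])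

lemma norm_vec_squared: "(norm v)\<^sup>2 = (\<Sum>j\<in>UNIV. (v $ j)\<^sup>2)"
  by (simp only: power2_norm_eq_inner) (simp add: inner_vec_def power2_eq_square)

lemma phi_V_eq_prod: "phi_V v = (\<Prod>j\<in>UNIV. exp (- (v $ j)\<^sup>2 / 2))"
  unfolding phi_V_def norm_vec_squared by (simp add: exp_sum[symmetric] sum_negf sum_divide_distrib)

text \<open>\<^const>\<open>Defs.std_normal_density\<close> is the density on \<open>real^'n\<close>; the unqualified
  name \<open>std_normal_density\<close> is HOL-Probability's abbreviation for \<open>normal_density 0 1\<close>.\<close>

lemma std_normal_density_diff_eq_prod:
  fixes z w :: "real^'n::finite"
  shows "Defs.std_normal_density (z - w) = (\<Prod>j\<in>UNIV. normal_density (z $ j) 1 (w $ j))"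
proof -
  have "(2 * pi) powr (- real CARD('n) / 2) = ((2 * pi) powr (- 1 / 2)) ^ CARD('n)"
    by (simp add: powr_powr powr_realpow[symmetric])
  also have "(2 * pi) powr (- 1 / 2) = 1 / sqrt (2 * pi)"
    by (simp add: powr_minus_divide powr_half_sqrt)
  finally have "Defs.std_normal_density (z - w) = (1 / sqrt (2 * pi)) ^ CARD('n) * phi_V (z - w)"
    by (simp add: Defs.std_normal_density_def phi_V_def)
  also have "\<dots> = (\<Prod>j\<in>UNIV. 1 / sqrt (2 * pi) * exp (- (z $ j - w $ j)\<^sup>2 / 2))"
    by (simp only: phi_V_eq_prod prod.distrib prod_constant vector_minus_component)
  finally show ?thesis
    by (simp add: normal_density_def power2_commute)
qed

lemma cis_monomial_normal_eq_prod:
  fixes z w \<omega> :: "real^'n::finite"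
  shows "cis (\<omega> \<bullet> w) * of_real (mi_pow w \<beta> * Defs.std_normal_density (z - w))
    = (\<Prod>j\<in>UNIV. cis (\<omega> $ j * w $ j) * of_real (normal_density (z $ j) 1 (w $ j) * (w $ j) ^ \<beta> j))"
  by (simp add: inner_vec_def cis_sum std_normal_density_diff_eq_prod mi_pow_def prod.distrib)

lemma integrable_cis_monomial_normal:
  fixes z \<omega> :: "real^'n::finite"
  shows "integrable lborel (\<lambda>w. cis (\<omega> \<bullet> w) * of_real (mi_pow w \<beta> * Defs.std_normal_density (z - w)))"
  unfolding cis_monomial_normal_eq_prod
  by (rule lborel_integral_prod_vec(1)) (rule integrable_cis_normal_power)

lemma prod_appell_poly_gauss_moment:
  fixes z \<omega> :: "real^'n::finite"
  shows "(\<Prod>j\<in>UNIV. appell_poly (\<lambda>i. of_real (gauss_moment i (z $ j))) (\<beta> j) (\<i> * of_real (\<omega> $ j)))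
    = (\<Sum>\<gamma>\<in>{\<gamma>. \<forall>j. \<gamma> j \<le> \<beta> j}.
         of_real (mi_binom \<beta> \<gamma> * mnu (\<lambda>j. \<beta> j - \<gamma> j) z) * mi_ipow \<omega> \<gamma>)"
proof -
  have "(\<Prod>j\<in>UNIV. appell_poly (\<lambda>i. of_real (gauss_moment i (z $ j))) (\<beta> j) (\<i> * of_real (\<omega> $ j)))
     = (\<Sum>\<gamma>\<in>PiE UNIV (\<lambda>j. {..\<beta> j}). \<Prod>j\<in>UNIV. of_nat (\<beta> j choose \<gamma> j)
          * of_real (gauss_moment (\<beta> j - \<gamma> j) (z $ j)) * (\<i> * of_real (\<omega> $ j)) ^ \<gamma> j)"
    unfolding appell_poly_def by (rule prod_sum_PiE) auto
  also have "PiE UNIV (\<lambda>j. {..\<beta> j}) = {\<gamma>. \<forall>j. \<gamma> j \<le> \<beta> j}"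
    by (auto simp: PiE_UNIV_domain)
  finally show ?thesis
    by (simp add: prod.distrib mi_binom_def mnu_eq_prod_gauss_moment mi_ipow_def)
qed

lemma fourier_monomial_normal:
  fixes z \<omega> :: "real^'n::finite"
  shows "fourier (\<lambda>w. of_real (mi_pow w \<beta> * Defs.std_normal_density (z - w))) \<omega>
    = cis (\<omega> \<bullet> z) * of_real (phi_V \<omega>)
      * (\<Sum>\<gamma>\<in>{\<gamma>. \<forall>j. \<gamma> j \<le> \<beta> j}.
           of_real (mi_binom \<beta> \<gamma> * mnu (\<lambda>j. \<beta> j - \<gamma> j) z) * mi_ipow \<omega> \<gamma>)"
proof -
  have "fourier (\<lambda>w. of_real (mi_pow w \<beta> * Defs.std_normal_density (z - w))) \<omega>
      = (\<Prod>j\<in>UNIV. fourier_normal_power (\<beta> j) (z $ j) (\<omega> $ j))"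
    unfolding fourier_def cis_monomial_normal_eq_prod fourier_normal_power_def
    by (rule lborel_integral_prod_vec(2)) (rule integrable_cis_normal_power)
  also have "\<dots> = cis (\<omega> \<bullet> z) * of_real (phi_V \<omega>)
      * (\<Prod>j\<in>UNIV. appell_poly (\<lambda>i. of_real (gauss_moment i (z $ j))) (\<beta> j) (\<i> * of_real (\<omega> $ j)))"
    by (simp add: fourier_normal_power_eq prod.distrib cis_sum inner_vec_def phi_V_eq_prod)
  finally show ?thesis
    by (simp only: prod_appell_poly_gauss_moment)
qed

section \<open>Multinomial expansion of monomials in A w\<close>

definition weak_compositions :: "'a set \<Rightarrow> nat \<Rightarrow> ('a \<Rightarrow> nat) set" where
  "weak_compositions K n = {r. (\<forall>k. k \<notin> K \<longrightarrow> r k = 0) \<and> sum r K = n}"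

lemma finite_weak_compositions:
  assumes "finite K"
  shows "finite (weak_compositions K n)"
proof -
  have "weak_compositions K n \<subseteq> (\<lambda>f k. if k \<in> K then f k else 0) ` PiE K (\<lambda>_. {..n})"
  proof
    fix r assume r: "r \<in> weak_compositions K n"
    have "r k \<le> n" if "k \<in> K" for k
      using r member_le_sum[OF that, of r] assms unfolding weak_compositions_def by auto
    then have "restrict r K \<in> PiE K (\<lambda>_. {..n})" by auto
    moreover have "r = (\<lambda>k. if k \<in> K then restrict r K k else 0)"
      using r unfolding weak_compositions_def by (auto simp: fun_eq_iff)
    ultimately show "r \<in> (\<lambda>f k. if k \<in> K then f k else 0) ` PiE K (\<lambda>_. {..n})" by blast
  qed
  then show ?thesis by (rule finite_subset) (intro finite_imageI finite_PiE assms; simp)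
qed

lemma sum_weak_compositions_insert:
  assumes "finite K" and "a \<notin> K"
  shows "(\<Sum>r\<in>weak_compositions (insert a K) n. h r)
       = (\<Sum>(j, r)\<in>Sigma {..n} (\<lambda>j. weak_compositions K (n - j)). h (r(a := j)))"
proof (rule sum.reindex_bij_witness[where j = "\<lambda>r. (r a, r(a := 0))" and i = "\<lambda>(j, r). r(a := j)"])
  fix p assume "p \<in> Sigma {..n} (\<lambda>j. weak_compositions K (n - j))"
  then obtain j r where p: "p = (j, r)" and "j \<le> n" and r: "r \<in> weak_compositions K (n - j)"
    by auto
  moreover have "(\<Sum>k\<in>K. (r(a := j)) k) = sum r K"
    using assms by (intro sum.cong) auto
  ultimately show "(\<lambda>(j, r). r(a := j)) p \<in> weak_compositions (insert a K) n"
    using assms unfolding weak_compositions_def by auto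
  have "r a = 0"
    using r assms unfolding weak_compositions_def by auto
  then show "(\<lambda>r. (r a, r(a := 0))) ((\<lambda>(j, r). r(a := j)) p) = p"
    using p by auto
next
  fix r assume r: "r \<in> weak_compositions (insert a K) n"
  have "(\<Sum>k\<in>K. (r(a := 0)) k) = sum r K"
    using assms by (intro sum.cong) auto
  moreover have "r a + sum r K = n"
    using r assms unfolding weak_compositions_def by auto
  ultimately show "(\<lambda>r. (r a, r(a := 0))) r \<in> Sigma {..n} (\<lambda>j. weak_compositions K (n - j))"
    using r unfolding weak_compositions_def by auto
qed auto

lemma multinomial_theorem:
  fixes x :: "'a \<Rightarrow> 'b::field_char_0"
  assumes "finite K"
  shows "(\<Sum>k\<in>K. x k) ^ n
    = (\<Sum>r\<in>weak_compositions K n. fact n / (\<Prod>k\<in>K. fact (r k)) * (\<Prod>k\<in>K. x k ^ r k))"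
  using assms
proof (induction K arbitrary: n rule: finite_induct)
  case empty
  have "weak_compositions ({} :: 'a set) n = (if n = 0 then {\<lambda>_. 0} else {})"
    by (auto simp: weak_compositions_def fun_eq_iff)
  then show ?case by simp
next
  case (insert a K)
  let ?term = "\<lambda>K n r. fact n / (\<Prod>k\<in>K. fact (r k)) * (\<Prod>k\<in>K. x k ^ r k)"
  have "(\<Sum>k\<in>insert a K. x k) ^ n = (\<Sum>j\<le>n. of_nat (n choose j) * x a ^ j * (\<Sum>k\<in>K. x k) ^ (n - j))"
    using insert.hyps by (simp add: binomial_ring)
  also have "\<dots> = (\<Sum>(j, r)\<in>Sigma {..n} (\<lambda>j. weak_compositions K (n - j)).
      of_nat (n choose j) * x a ^ j * ?term K (n - j) r)"
    by (simp add: insert.IH sum_distrib_left sum.Sigma finite_weak_compositions insert.hyps)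
  also have "\<dots> = (\<Sum>(j, r)\<in>Sigma {..n} (\<lambda>j. weak_compositions K (n - j)). ?term (insert a K) n (r(a := j)))"
  proof -
    have "of_nat (n choose j) * x a ^ j * ?term K (n - j) r = ?term (insert a K) n (r(a := j))"
      if "j \<le> n" for j r
    proof -
      have upd: "(\<Prod>k\<in>K. h k ((r(a := j)) k)) = (\<Prod>k\<in>K. h k (r k))" for h :: "'a \<Rightarrow> nat \<Rightarrow> 'b"
        using insert.hyps by (intro prod.cong) auto
      have "fact n = fact j * (of_nat (n choose j) * fact (n - j) :: 'b)"
        using that by (simp add: binomial_fact)
      moreover have "(\<Prod>k\<in>K. fact (r k) :: 'b) \<noteq> 0"
        using insert.hyps by simp
      ultimately show ?thesis
        using insert.hyps upd[of "\<lambda>_. fact"] upd[of "\<lambda>k e. x k ^ e"] by (simp add: field_simps)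
    qed
    then show ?thesis
      by (intro sum.cong refl) auto
  qed
  also have "\<dots> = (\<Sum>r\<in>weak_compositions (insert a K) n. ?term (insert a K) n r)"
    using insert.hyps by (rule sum_weak_compositions_insert[symmetric])
  finally show ?case .
qed

lemma finite_multi_indices: "finite (multi_indices m :: ('n::finite \<Rightarrow> nat) set)"
proof (rule finite_subset)
  show "multi_indices m \<subseteq> PiE (UNIV :: 'n set) (\<lambda>_. {..m})"
  proof
    fix \<alpha> :: "'n \<Rightarrow> nat" assume "\<alpha> \<in> multi_indices m"
    then have "\<alpha> j \<le> m" for j
      using member_le_sum[of j UNIV \<alpha>] unfolding multi_indices_def mi_abs_def by auto
    then show "\<alpha> \<in> PiE UNIV (\<lambda>_. {..m})" by (auto simp: PiE_UNIV_domain)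
  qed
qed (intro finite_PiE; simp)

lemma PiE_weak_compositions_UNIV:
  "PiE UNIV (\<lambda>j. weak_compositions UNIV (\<alpha> j)) = {N. \<forall>j. sum (N j) UNIV = \<alpha> j}"
  by (auto simp: PiE_UNIV_domain weak_compositions_def)

lemma mi_pow_matrix_vector_mult_rowsums:
  fixes A :: "real^'n::finite^'n" and w :: "real^'n"
  shows "mi_pow (A *v w) \<alpha> = (\<Sum>N\<in>{N. \<forall>j. sum (N j) UNIV = \<alpha> j}.
     mi_fact \<alpha> / (\<Prod>j\<in>UNIV. \<Prod>k\<in>UNIV. fact (N j k)) * (\<Prod>j\<in>UNIV. \<Prod>k\<in>UNIV. (A $ j $ k) ^ N j k)
      * mi_pow w (\<lambda>k. \<Sum>j\<in>UNIV. N j k))"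
proof -
  have pow_split: "(\<Prod>j\<in>UNIV. \<Prod>k\<in>UNIV. (A $ j $ k * w $ k) ^ N j k)
      = (\<Prod>j\<in>UNIV. \<Prod>k\<in>UNIV. (A $ j $ k) ^ N j k) * mi_pow w (\<lambda>k. \<Sum>j\<in>UNIV. N j k)"
    for N :: "'n \<Rightarrow> 'n \<Rightarrow> nat"
  proof -
    have "(\<Prod>j\<in>UNIV. \<Prod>k\<in>UNIV. (w $ k) ^ N j k) = mi_pow w (\<lambda>k. \<Sum>j\<in>UNIV. N j k)"
      unfolding mi_pow_def power_sum by (rule prod.swap)
    then show ?thesis
      by (simp add: power_mult_distrib prod.distrib)
  qed
  have "mi_pow (A *v w) \<alpha> = (\<Prod>j\<in>UNIV. (\<Sum>k\<in>UNIV. A $ j $ k * w $ k) ^ \<alpha> j)"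
    by (simp add: mi_pow_def matrix_vector_mult_def)
  also have "\<dots> = (\<Prod>j\<in>UNIV. \<Sum>r\<in>weak_compositions UNIV (\<alpha> j).
      fact (\<alpha> j) / (\<Prod>k\<in>UNIV. fact (r k)) * (\<Prod>k\<in>UNIV. (A $ j $ k * w $ k) ^ r k))"
    by (simp only: multinomial_theorem[OF finite])
  also have "\<dots> = (\<Sum>N\<in>{N. \<forall>j. sum (N j) UNIV = \<alpha> j}. \<Prod>j\<in>UNIV.
      fact (\<alpha> j) / (\<Prod>k\<in>UNIV. fact (N j k)) * (\<Prod>k\<in>UNIV. (A $ j $ k * w $ k) ^ N j k))"
    unfolding PiE_weak_compositions_UNIV[symmetric] by (rule prod_sum_PiE) (auto intro: finite_weak_compositions)
  also have "\<dots> = (\<Sum>N\<in>{N. \<forall>j. sum (N j) UNIV = \<alpha> j}.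
     mi_fact \<alpha> / (\<Prod>j\<in>UNIV. \<Prod>k\<in>UNIV. fact (N j k)) * (\<Prod>j\<in>UNIV. \<Prod>k\<in>UNIV. (A $ j $ k) ^ N j k)
      * mi_pow w (\<lambda>k. \<Sum>j\<in>UNIV. N j k))"
    unfolding prod.distrib prod_dividef pow_split mi_fact_def by (simp add: mult_ac)
  finally show ?thesis .
qed

lemma mi_pow_matrix_vector_mult:
  fixes A :: "real^'n::finite^'n" and w :: "real^'n"
  assumes "\<alpha> \<in> multi_indices m"
  shows "mi_pow (A *v w) \<alpha> = (\<Sum>\<beta>\<in>multi_indices m. Ccoef \<alpha> \<beta> A * mi_pow w \<beta>)"
proof -
  let ?R = "{N :: 'n \<Rightarrow> 'n \<Rightarrow> nat. \<forall>j. sum (N j) UNIV = \<alpha> j}"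
  let ?colsums = "\<lambda>N :: 'n \<Rightarrow> 'n \<Rightarrow> nat. \<lambda>k. \<Sum>j\<in>UNIV. N j k"
  let ?h = "\<lambda>N. mi_fact \<alpha> / (\<Prod>j\<in>UNIV. \<Prod>k\<in>UNIV. fact (N j k))
      * (\<Prod>j\<in>UNIV. \<Prod>k\<in>UNIV. (A $ j $ k) ^ N j k) * mi_pow w (?colsums N)"
  have "finite ?R"
    unfolding PiE_weak_compositions_UNIV[symmetric] by (simp add: finite_PiE finite_weak_compositions)
  moreover have "?colsums ` ?R \<subseteq> multi_indices m"
  proof
    fix \<beta> assume "\<beta> \<in> ?colsums ` ?R"
    then obtain N where "N \<in> ?R" and \<beta>: "\<beta> = ?colsums N" by blast
    then have "mi_abs \<beta> = mi_abs \<alpha>"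
      unfolding mi_abs_def \<beta> by (subst sum.swap) simp
    then show "\<beta> \<in> multi_indices m"
      using assms by (simp add: multi_indices_def)
  qed
  ultimately have "sum ?h ?R = (\<Sum>\<beta>\<in>multi_indices m. sum ?h {N \<in> ?R. ?colsums N = \<beta>})"
    by (rule sum.group[symmetric, OF _ finite_multi_indices])
  also have "\<dots> = (\<Sum>\<beta>\<in>multi_indices m. Ccoef \<alpha> \<beta> A * mi_pow w \<beta>)"
  proof (rule sum.cong[OF refl])
    fix \<beta> :: "'n \<Rightarrow> nat"
    have Nset: "Nset \<alpha> \<beta> = {N \<in> ?R. ?colsums N = \<beta>}"
      by (auto simp: Nset_def fun_eq_iff)
    show "sum ?h {N \<in> ?R. ?colsums N = \<beta>} = Ccoef \<alpha> \<beta> A * mi_pow w \<beta>"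
      unfolding Ccoef_def sum_distrib_right Nset by (intro sum.cong refl) auto
  qed
  finally show ?thesis
    by (simp only: mi_pow_matrix_vector_mult_rowsums)
qed

section \<open>Fourier transform of g(A w) times the normal density\<close>

lemma fourier_sum:
  assumes "\<And>i. i \<in> I \<Longrightarrow> integrable lborel (\<lambda>x. cis (\<omega> \<bullet> x) * \<psi> i x)"
  shows "fourier (\<lambda>x. \<Sum>i\<in>I. \<psi> i x) \<omega> = (\<Sum>i\<in>I. fourier (\<psi> i) \<omega>)"
  unfolding fourier_def sum_distrib_left using assms by (rule Bochner_Integration.integral_sum)

lemma fourier_cmult: "fourier (\<lambda>x. c * \<psi> x) \<omega> = c * fourier \<psi> \<omega>"
  unfolding fourier_def mult.left_commute[of _ c] by (rule Bochner_Integration.integral_mult_right_zero)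

lemma fourier_mpoly_normal:
  fixes A :: "real^'n::finite^'n" and z \<omega> :: "real^'n"
  shows "fourier (\<lambda>w. of_real (mpoly_eval m a (A *v w) * Defs.std_normal_density (z - w))) \<omega>
    = cis (\<omega> \<bullet> z) * of_real (phi_V \<omega>)
      * (\<Sum>\<alpha>\<in>multi_indices m. \<Sum>\<beta>\<in>multi_indices m. of_real (a \<alpha> * Ccoef \<alpha> \<beta> A)
           * (\<Sum>\<gamma>\<in>{\<gamma>. \<forall>j. \<gamma> j \<le> \<beta> j}.
                of_real (mi_binom \<beta> \<gamma> * mnu (\<lambda>j. \<beta> j - \<gamma> j) z) * mi_ipow \<omega> \<gamma>))"
proof -
  let ?M = "multi_indices m :: ('n \<Rightarrow> nat) set"
  let ?mono = "\<lambda>\<beta> w. complex_of_real (mi_pow w \<beta> * Defs.std_normal_density (z - w))"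
  let ?c = "\<lambda>\<alpha> \<beta>. complex_of_real (a \<alpha> * Ccoef \<alpha> \<beta> A)"
  have int: "integrable lborel (\<lambda>w. cis (\<omega> \<bullet> w) * (c * ?mono \<beta> w))" for c \<beta>
    unfolding mult.left_commute[of _ c]
    by (intro Bochner_Integration.integrable_mult_right integrable_cis_monomial_normal)
  have expand: "(\<lambda>w. complex_of_real (mpoly_eval m a (A *v w) * Defs.std_normal_density (z - w)))
      = (\<lambda>w. \<Sum>\<alpha>\<in>?M. \<Sum>\<beta>\<in>?M. ?c \<alpha> \<beta> * ?mono \<beta> w)"
    unfolding mpoly_eval_def
    by (auto simp: fun_eq_iff mi_pow_matrix_vector_mult sum_distrib_left sum_distrib_right mult_ac
        intro!: sum.cong)
  have "fourier (\<lambda>w. complex_of_real (mpoly_eval m a (A *v w) * Defs.std_normal_density (z - w))) \<omega>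
      = (\<Sum>\<alpha>\<in>?M. fourier (\<lambda>w. \<Sum>\<beta>\<in>?M. ?c \<alpha> \<beta> * ?mono \<beta> w) \<omega>)"
    unfolding expand
    by (rule fourier_sum) (unfold sum_distrib_left, intro Bochner_Integration.integrable_sum int)
  also have "\<dots> = (\<Sum>\<alpha>\<in>?M. \<Sum>\<beta>\<in>?M. ?c \<alpha> \<beta> * fourier (?mono \<beta>) \<omega>)"
    by (intro sum.cong refl) (simp only: fourier_sum int fourier_cmult)
  also have "\<dots> = (\<Sum>\<alpha>\<in>?M. \<Sum>\<beta>\<in>?M. ?c \<alpha> \<beta> * (cis (\<omega> \<bullet> z) * of_real (phi_V \<omega>)
      * (\<Sum>\<gamma>\<in>{\<gamma>. \<forall>j. \<gamma> j \<le> \<beta> j}.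
           of_real (mi_binom \<beta> \<gamma> * mnu (\<lambda>j. \<beta> j - \<gamma> j) z) * mi_ipow \<omega> \<gamma>)))"
    by (simp only: fourier_monomial_normal)
  finally show ?thesis
    by (simp only: sum_distrib_left mult_ac)
qed

lemma sum_Ccoef_eq_sum_bcoef:
  fixes A :: "real^'n::finite^'n" and z \<omega> :: "real^'n"
  shows "(\<Sum>\<alpha>\<in>multi_indices m. \<Sum>\<beta>\<in>multi_indices m. of_real (a \<alpha> * Ccoef \<alpha> \<beta> A)
           * (\<Sum>\<gamma>\<in>{\<gamma>. \<forall>j. \<gamma> j \<le> \<beta> j}.
                of_real (mi_binom \<beta> \<gamma> * mnu (\<lambda>j. \<beta> j - \<gamma> j) z) * mi_ipow \<omega> \<gamma>))
       = (\<Sum>\<gamma>\<in>multi_indices m. complex_of_real (bcoef m a A z \<gamma>) * mi_ipow \<omega> \<gamma>)"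
proof -
  let ?M = "multi_indices m :: ('n \<Rightarrow> nat) set"
  let ?F = "\<lambda>\<alpha> \<beta> \<gamma>. complex_of_real (a \<alpha> * (Ccoef \<alpha> \<beta> A * mi_binom \<beta> \<gamma> * mnu (\<lambda>j. \<beta> j - \<gamma> j) z))
      * mi_ipow \<omega> \<gamma>"
  have below: "{\<gamma>. \<forall>j. \<gamma> j \<le> \<beta> j} = {\<gamma> \<in> ?M. \<forall>j. \<gamma> j \<le> \<beta> j}" if "\<beta> \<in> ?M" for \<beta>
  proof -
    have "mi_abs \<gamma> \<le> mi_abs \<beta>" if "\<forall>j. \<gamma> j \<le> \<beta> j" for \<gamma>
      unfolding mi_abs_def using that by (intro sum_mono) auto
    then show ?thesis
      using \<open>\<beta> \<in> ?M\<close> unfolding multi_indices_def by (auto intro: order.trans)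
  qed
  have "(\<Sum>\<alpha>\<in>?M. \<Sum>\<beta>\<in>?M. of_real (a \<alpha> * Ccoef \<alpha> \<beta> A)
           * (\<Sum>\<gamma>\<in>{\<gamma>. \<forall>j. \<gamma> j \<le> \<beta> j}.
                of_real (mi_binom \<beta> \<gamma> * mnu (\<lambda>j. \<beta> j - \<gamma> j) z) * mi_ipow \<omega> \<gamma>))
      = (\<Sum>\<alpha>\<in>?M. \<Sum>\<beta>\<in>?M. \<Sum>\<gamma>\<in>{\<gamma> \<in> ?M. \<forall>j. \<gamma> j \<le> \<beta> j}. ?F \<alpha> \<beta> \<gamma>)"
    by (intro sum.cong refl) (simp add: below sum_distrib_left mult_ac)
  also have "\<dots> = (\<Sum>\<alpha>\<in>?M. \<Sum>\<gamma>\<in>?M. \<Sum>\<beta>\<in>{\<beta> \<in> ?M. \<forall>j. \<gamma> j \<le> \<beta> j}. ?F \<alpha> \<beta> \<gamma>)"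
    by (intro sum.cong refl sum.swap_restrict finite_multi_indices)
  also have "\<dots> = (\<Sum>\<gamma>\<in>?M. \<Sum>\<alpha>\<in>?M. \<Sum>\<beta>\<in>{\<beta> \<in> ?M. \<forall>j. \<gamma> j \<le> \<beta> j}. ?F \<alpha> \<beta> \<gamma>)"
    by (rule sum.swap)
  also have "\<dots> = (\<Sum>\<gamma>\<in>?M. complex_of_real (bcoef m a A z \<gamma>) * mi_ipow \<omega> \<gamma>)"
    unfolding bcoef_def of_real_sum sum_distrib_right sum_distrib_left of_real_mult
    by (simp add: mult_ac)
  finally show ?thesis .
qed

theorem mainTheorem14:
  fixes \<Sigma>0 A :: "real^'n::finite^'n" and y :: "real^'n" and m :: nat
    and a :: "('n \<Rightarrow> nat) \<Rightarrow> real" and \<omega> :: "real^'n"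
  assumes sym: "transpose \<Sigma>0 = \<Sigma>0"
    and pd: "\<And>x. x \<noteq> 0 \<Longrightarrow> x \<bullet> (\<Sigma>0 *v x) > 0"
    and A_sym: "transpose A = A"
    and A_pd: "\<And>x. x \<noteq> 0 \<Longrightarrow> x \<bullet> (A *v x) > 0"
    and A_sq: "A ** A = \<Sigma>0"
  shows "(let z0 = matrix_inv A *v y;
              lam = (\<lambda>w. complex_of_real (mpoly_eval m a (A *v w) * Defs.std_normal_density (z0 - w)))
          in fourier lam \<omega> / complex_of_real (phi_V (- \<omega>))
             = cis (\<omega> \<bullet> z0) *
               (\<Sum>\<gamma>\<in>multi_indices m. complex_of_real (bcoef m a A z0 \<gamma>) * mi_ipow \<omega> \<gamma>))"
proof -
  \<comment> \<open>The identity holds for every matrix A and every centre z0.\<close>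
  have "phi_V (- \<omega>) = phi_V \<omega>" and "complex_of_real (phi_V \<omega>) \<noteq> 0"
    by (simp_all add: phi_V_def)
  then show ?thesis
    unfolding Let_def fourier_mpoly_normal sum_Ccoef_eq_sum_bcoef by simp
qed

end
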